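(* Let $\omega:\Gamma^2\to\Gamma$ be a group morphism and $h\in\Gamma$, and suppose there is a map $b:\{0,1\}^*\to\Gamma$ with $b(u)=h\cdot\omega(b(u0),b(u1))$ for all $u\in\{0,1\}^*$. Then $G(\omega)\cong G(\mathrm{ad}(h)\circ\omega)$.
   Context: $\mathrm{ad}(h)(g)=hgh^{-1}$. $\{0,1\}^*$ denotes the finite words over $\{0,1\}$; $\mathfrak C=\{0,1\}^{\mathbb N}$. A finite complete prefix code is a finite set $\{t_1,\dots,t_n\}\subset\{0,1\}^*$ such that every $x\in\mathfrak C$ has exactly one $t_i$ as prefix. Thompson's group $V$ is the group of homeomorphisms $v$ of $\mathfrak C$ for which there exist finite complete prefix codes $\{t_i\},\{s_i\}$ and a permutation $\sigma$ with $v(t_iw)=s_{\sigma(i)}w$. For a group morphism $\omega:\Gamma^2\to\Gamma$, $K(\omega)$ is the group of maps $a:\{0,1\}^*\to\Gamma$ (pointwise product) with $a(u)=\omega(a(u0),a(u1))$ for all $u$; $V$ acts on it by $\pi(v)(a)(s_{\sigma(i)}u)=a(t_iu)$ for all $i$, $u$ (determining $\pi(v)(a)\in K(\omega)$ uniquely); $G(\omega):=K(\omega)\rtimes V$ with $vav^{-1}=\pi(v)(a)$. *)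

theory Defs
  imports "HOL-Algebra.Algebra" "HOL-Analysis.Analysis"
begin

text \<open>Finite words over {0,1} are bool lists (False = 0, True = 1);
  the Cantor space is nat => bool.\<close>

definition conc :: "bool list \<Rightarrow> (nat \<Rightarrow> bool) \<Rightarrow> (nat \<Rightarrow> bool)" where
  "conc t x = (\<lambda>k. if k < length t then t ! k else x (k - length t))"

definition has_prefix :: "(nat \<Rightarrow> bool) \<Rightarrow> bool list \<Rightarrow> bool" where
  "has_prefix x t \<longleftrightarrow> (\<forall>k < length t. x k = t ! k)"

definition complete_prefix_code :: "bool list set \<Rightarrow> bool" where
  "complete_prefix_code T \<longleftrightarrow> finite T \<and> (\<forall>x. \<exists>!t. t \<in> T \<and> has_prefix x t)"

definition V_rep :: "((nat \<Rightarrow> bool) \<Rightarrow> (nat \<Rightarrow> bool)) \<Rightarrow> bool list list \<Rightarrow> bool list list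
    \<Rightarrow> (nat \<Rightarrow> nat) \<Rightarrow> bool" where
  "V_rep v ts ss \<sigma> \<longleftrightarrow> length ts = length ss \<and> distinct ts \<and> distinct ss
     \<and> complete_prefix_code (set ts) \<and> complete_prefix_code (set ss)
     \<and> \<sigma> permutes {..<length ts}
     \<and> (\<forall>i < length ts. \<forall>w. v (conc (ts ! i) w) = conc (ss ! \<sigma> i) w)"

definition V_set :: "((nat \<Rightarrow> bool) \<Rightarrow> (nat \<Rightarrow> bool)) set" where
  "V_set = {v. (\<exists>v'. homeomorphism UNIV UNIV v v') \<and> (\<exists>ts ss \<sigma>. V_rep v ts ss \<sigma>)}"

definition ThompsonV :: "((nat \<Rightarrow> bool) \<Rightarrow> (nat \<Rightarrow> bool)) monoid" where
  "ThompsonV = \<lparr>partial_object.carrier = V_set, monoid.mult = (\<lambda>v w. v \<circ> w), monoid.one = id\<rparr>"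

definition K_set :: "('g, 'm) monoid_scheme \<Rightarrow> ('g \<times> 'g \<Rightarrow> 'g) \<Rightarrow> (bool list \<Rightarrow> 'g) set" where
  "K_set \<Gamma> \<omega> = {a. (\<forall>u. a u \<in> carrier \<Gamma>) \<and>
      (\<forall>u. a u = \<omega> (a (u @ [False]), a (u @ [True])))}"

definition pi_act :: "('g, 'm) monoid_scheme \<Rightarrow> ('g \<times> 'g \<Rightarrow> 'g)
    \<Rightarrow> ((nat \<Rightarrow> bool) \<Rightarrow> (nat \<Rightarrow> bool)) \<Rightarrow> (bool list \<Rightarrow> 'g) \<Rightarrow> (bool list \<Rightarrow> 'g)" where
  "pi_act \<Gamma> \<omega> v a = (THE b. b \<in> K_set \<Gamma> \<omega> \<and> (\<exists>ts ss \<sigma>. V_rep v ts ss \<sigma> \<and>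
      (\<forall>i < length ts. \<forall>u. b (ss ! \<sigma> i @ u) = a (ts ! i @ u))))"

definition G_grp :: "('g, 'm) monoid_scheme \<Rightarrow> ('g \<times> 'g \<Rightarrow> 'g)
    \<Rightarrow> ((bool list \<Rightarrow> 'g) \<times> ((nat \<Rightarrow> bool) \<Rightarrow> (nat \<Rightarrow> bool))) monoid" where
  "G_grp \<Gamma> \<omega> = \<lparr>partial_object.carrier = K_set \<Gamma> \<omega> \<times> V_set,
     monoid.mult = (\<lambda>(a, v) (b, w). (\<lambda>u. a u \<otimes>\<^bsub>\<Gamma>\<^esub> pi_act \<Gamma> \<omega> v b u, v \<circ> w)),
     monoid.one = (\<lambda>u. \<one>\<^bsub>\<Gamma>\<^esub>, id)\<rparr>"

end

theory Submission
  imports Defs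
begin

(* The isomorphism is (a, v) |-> (b a c_v^-1, v), where c_v is pi(v)(b) computed for the
  affine recursion rho(x, y) = h omega(x, y) that b satisfies.  Since b and c_v both obey
  this recursion, the factor h appears at both ends of b(u) a(u) c_v(u)^-1, which therefore
  obeys the recursion ad(h) o omega exactly when a obeys omega.  A map satisfying one of
  these recursions is determined by its values on long words, and on long words every
  element of V just relabels prefixes; so the homomorphism property reduces to a pointwise
  identity in Gamma on long words. *)

type_synonym cantor_map = "(nat \<Rightarrow> bool) \<Rightarrow> (nat \<Rightarrow> bool)"

section \<open>Elements of V exchange prefixes of long words\<close>

lemma conc_append: "conc (p @ q) x = conc p (conc q x)"
  unfolding conc_def by (auto simp: nth_append fun_eq_iff)

lemma conc_shorter_differs:
  assumes "length p < length q"
  shows "conc p (\<lambda>_. \<not> q ! length p) (length p) \<noteq> conc q (\<lambda>_. \<not> q ! length p) (length p)"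
  using assms by (simp add: conc_def)

lemma conc_inject:
  assumes "\<And>x. conc p x = conc q x"
  shows "p = q"
proof (rule nth_equalityI)
  show len: "length p = length q"
    using conc_shorter_differs[of p q] conc_shorter_differs[of q p] assms
    by (metis linorder_neqE_nat)
  fix i assume "i < length p"
  then show "p ! i = q ! i"
    using assms[of "\<lambda>_. False"] len by (metis conc_def)
qed

definition pre_word :: "cantor_map \<Rightarrow> bool list \<Rightarrow> bool list" where
  "pre_word v u = (THE p. \<forall>x. v (conc p x) = conc u x)"

lemma pre_word_eqI:
  assumes "inj v" and "\<And>x. v (conc p x) = conc u x"
  shows "pre_word v u = p"
  unfolding pre_word_def
proof (rule the_equality)
  show "\<forall>x. v (conc p x) = conc u x" using assms(2) by blast
  fix q assume "\<forall>x. v (conc q x) = conc u x"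
  then show "q = p" using assms by (metis conc_inject injD)
qed

(* The bound on the length lost is what makes this notion closed under composition. *)
definition prefix_exchange :: "cantor_map \<Rightarrow> nat \<Rightarrow> bool" where
  "prefix_exchange v N \<longleftrightarrow> inj v \<and> (\<forall>u. N \<le> length u \<longrightarrow>
     (\<forall>x. v (conc (pre_word v u) x) = conc u x) \<and> length u \<le> length (pre_word v u) + N)"

lemma prefix_exchangeD:
  assumes "prefix_exchange v N" and "N \<le> length u"
  shows "v (conc (pre_word v u) x) = conc u x" and "length u \<le> length (pre_word v u) + N"
  using assms unfolding prefix_exchange_def by blast+

lemma pre_word_append:
  assumes "prefix_exchange v N" and "N \<le> length u"
  shows "pre_word v (u @ w) = pre_word v u @ w"
  using assms prefix_exchangeD(1)[OF assms]
  by (intro pre_word_eqI) (auto simp: prefix_exchange_def conc_append)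

lemma pre_word_comp:
  assumes v: "prefix_exchange v N" and w: "prefix_exchange w M" and "N + M \<le> length u"
  shows "pre_word (v \<circ> w) u = pre_word w (pre_word v u)"
proof (rule pre_word_eqI)
  show "inj (v \<circ> w)" using v w by (simp add: prefix_exchange_def inj_compose)
  have "M \<le> length (pre_word v u)" using prefix_exchangeD(2)[OF v, of u] assms(3) by simp
  then show "(v \<circ> w) (conc (pre_word w (pre_word v u)) x) = conc u x" for x
    using prefix_exchangeD(1)[OF w] prefix_exchangeD(1)[OF v] assms(3) by simp
qed

lemma prefix_exchange_comp:
  assumes v: "prefix_exchange v N" and w: "prefix_exchange w M"
  shows "prefix_exchange (v \<circ> w) (N + M)"
  unfolding prefix_exchange_def
proof (intro conjI allI impI)
  show "inj (v \<circ> w)" using v w by (simp add: prefix_exchange_def inj_compose)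
  fix u :: "bool list" assume u: "N + M \<le> length u"
  define p where "p = pre_word v u"
  have p: "length u \<le> length p + N" "\<And>x. v (conc p x) = conc u x"
    using prefix_exchangeD[OF v] u unfolding p_def by auto
  then have "M \<le> length p" using u by simp
  then show "(v \<circ> w) (conc (pre_word (v \<circ> w) u) x) = conc u x"
    and "length u \<le> length (pre_word (v \<circ> w) u) + (N + M)" for x
    using pre_word_comp[OF v w u] prefix_exchangeD[OF w] p unfolding p_def by fastforce+
qed

lemma complete_prefix_code_prefix:
  assumes "complete_prefix_code S" and "\<And>s. s \<in> S \<Longrightarrow> length s \<le> length u"
  shows "\<exists>s\<in>S. \<exists>w. u = s @ w"
proof -
  obtain s where s: "s \<in> S" "has_prefix (conc u (\<lambda>_. False)) s"
    using assms(1) unfolding complete_prefix_code_def by blast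
  have "take (length s) u = s"
    using s(2) assms(2)[OF s(1)] by (auto simp: has_prefix_def conc_def intro: nth_equalityI)
  then show ?thesis using s(1) by (metis append_take_drop_id)
qed

lemma V_set_inj:
  assumes "v \<in> V_set" shows "inj v"
proof -
  obtain v' where "homeomorphism UNIV UNIV v v'" using assms unfolding V_set_def by blast
  then have "v' (v x) = x" for x unfolding homeomorphism_def by simp
  then show ?thesis by (metis injI)
qed

lemma V_rep_decomp:
  assumes rep: "V_rep v ts ss \<sigma>" and u: "sum_list (map length ss) \<le> length u"
  shows "\<exists>i<length ts. \<exists>w. u = ss ! \<sigma> i @ w"
proof -
  have "complete_prefix_code (set ss)" and len: "length ts = length ss"
    and \<sigma>: "\<sigma> permutes {..<length ts}"
    using rep unfolding V_rep_def by auto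
  moreover have "length s \<le> length u" if "s \<in> set ss" for s
    using member_le_sum_list[of "length s" "map length ss"] that u by simp
  ultimately obtain s w where "s \<in> set ss" "u = s @ w"
    using complete_prefix_code_prefix by blast
  moreover from \<open>s \<in> set ss\<close> obtain j where "j < length ss" "s = ss ! j"
    by (metis in_set_conv_nth)
  moreover from this obtain i where "i < length ts" "\<sigma> i = j"
    using permutes_image[OF \<sigma>] len by (metis imageE lessThan_iff)
  ultimately show ?thesis by blast
qed

lemma V_rep_pre_word:
  assumes "V_rep v ts ss \<sigma>" and "inj v" and "i < length ts"
  shows "pre_word v (ss ! \<sigma> i @ w) = ts ! i @ w"
  using assms by (intro pre_word_eqI) (auto simp: V_rep_def conc_append)

lemma V_rep_prefix_exchange:
  assumes v: "v \<in> V_set" and rep: "V_rep v ts ss \<sigma>"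
  shows "prefix_exchange v (sum_list (map length ss))"
  unfolding prefix_exchange_def
proof (intro conjI allI impI)
  show inj: "inj v" using V_set_inj[OF v] .
  fix u :: "bool list" assume "sum_list (map length ss) \<le> length u"
  then obtain i w where i: "i < length ts" and u: "u = ss ! \<sigma> i @ w"
    using V_rep_decomp[OF rep] by blast
  have pre: "pre_word v (ss ! \<sigma> i @ w) = ts ! i @ w" using V_rep_pre_word[OF rep inj i] .
  show "v (conc (pre_word v u) x) = conc u x" for x
    using rep i unfolding u pre V_rep_def by (simp add: conc_append)
  have "\<sigma> i < length ss"
    using rep i unfolding V_rep_def by (metis lessThan_iff permutes_in_image)
  then have "length (ss ! \<sigma> i) \<le> sum_list (map length ss)"
    by (simp add: member_le_sum_list)
  then show "length u \<le> length (pre_word v u) + sum_list (map length ss)"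
    unfolding u pre by simp
qed

lemma V_set_prefix_exchange: "v \<in> V_set \<Longrightarrow> \<exists>N. prefix_exchange v N"
  using V_rep_prefix_exchange unfolding V_set_def by blast

section \<open>Maps compatible with a recursion on the binary tree\<close>

definition tree_compatible :: "('g \<times> 'g \<Rightarrow> 'g) \<Rightarrow> (bool list \<Rightarrow> 'g) \<Rightarrow> bool" where
  "tree_compatible \<rho> f \<longleftrightarrow> (\<forall>u. f u = \<rho> (f (u @ [False]), f (u @ [True])))"

lemma K_set_iff: "a \<in> K_set \<Gamma> \<rho> \<longleftrightarrow> (\<forall>u. a u \<in> carrier \<Gamma>) \<and> tree_compatible \<rho> a"
  unfolding K_set_def tree_compatible_def by simp

lemma word_down_induct [case_names deep split]:
  assumes "\<And>u. N \<le> length u \<Longrightarrow> P u"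
    and "\<And>u. P (u @ [False]) \<Longrightarrow> P (u @ [True]) \<Longrightarrow> P u"
  shows "P u"
proof (induction "N - length u" arbitrary: u)
  case 0
  then show ?case using assms(1) by simp
next
  case (Suc k)
  then have "k = N - length (u @ [c])" for c by simp
  then show ?case using Suc.hyps(1) assms(2) by blast
qed

function extend_below :: "('g \<times> 'g \<Rightarrow> 'g) \<Rightarrow> nat \<Rightarrow> (bool list \<Rightarrow> 'g) \<Rightarrow> bool list \<Rightarrow> 'g" where
  "extend_below \<rho> N g u = (if N \<le> length u then g u
     else \<rho> (extend_below \<rho> N g (u @ [False]), extend_below \<rho> N g (u @ [True])))"
  by auto
termination by (relation "Wellfounded.measure (\<lambda>(_, N, _, u). N - length u)") auto

declare extend_below.simps [simp del]

lemma extend_below_deep [simp]: "N \<le> length u \<Longrightarrow> extend_below \<rho> N g u = g u"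
  by (simp add: extend_below.simps)

lemma extend_below_compatible:
  assumes "\<And>u. N \<le> length u \<Longrightarrow> g u = \<rho> (g (u @ [False]), g (u @ [True]))"
  shows "tree_compatible \<rho> (extend_below \<rho> N g)"
  unfolding tree_compatible_def
proof
  fix u
  show "extend_below \<rho> N g u = \<rho> (extend_below \<rho> N g (u @ [False]), extend_below \<rho> N g (u @ [True]))"
  proof (cases "N \<le> length u")
    case True
    then show ?thesis by (simp add: assms[OF True])
  next
    case False
    then show ?thesis by (subst extend_below.simps) simp
  qed
qed

lemma tree_compatible_unique:
  assumes f: "tree_compatible \<rho> f" and g: "tree_compatible \<rho> g"
    and deep: "\<And>u. N \<le> length u \<Longrightarrow> f u = g u"
  shows "f = g"
proof
  fix u show "f u = g u"
  proof (induction u rule: word_down_induct[of N])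
    case (deep u) then show ?case using assms(3) by blast
  next
    case (split u) then show ?case using f g unfolding tree_compatible_def by metis
  qed
qed

lemma tree_compatible_closed:
  assumes "tree_compatible \<rho> f" and "\<And>u. N \<le> length u \<Longrightarrow> f u \<in> S"
    and "\<And>x y. x \<in> S \<Longrightarrow> y \<in> S \<Longrightarrow> \<rho> (x, y) \<in> S"
  shows "f u \<in> S"
proof (induction u rule: word_down_induct[of N])
  case (deep u) then show ?case using assms(2) by blast
next
  case (split u) then show ?case using assms(1,3) unfolding tree_compatible_def by metis
qed

section \<open>Transport of compatible maps along prefix exchanges\<close>

(* pi(v)(a) generalised from V to all prefix exchanges (composites of elements of V are
  covered without proving that V is closed under composition) and to any recursion rho. *)
definition push :: "('g \<times> 'g \<Rightarrow> 'g) \<Rightarrow> cantor_map \<Rightarrow> (bool list \<Rightarrow> 'g) \<Rightarrow> bool list \<Rightarrow> 'g" where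
  "push \<rho> v a = (THE f. tree_compatible \<rho> f \<and> (\<exists>N. \<forall>u. N \<le> length u \<longrightarrow> f u = a (pre_word v u)))"

lemma pre_word_compatible:
  assumes "prefix_exchange v N" and "tree_compatible \<rho> a" and "N \<le> length u"
  shows "a (pre_word v u) = \<rho> (a (pre_word v (u @ [False])), a (pre_word v (u @ [True])))"
proof -
  have "a (pre_word v u) = \<rho> (a (pre_word v u @ [False]), a (pre_word v u @ [True]))"
    using assms(2) unfolding tree_compatible_def by blast
  then show ?thesis by (simp add: pre_word_append[OF assms(1,3)])
qed

lemma push_eq_extend_below:
  assumes v: "prefix_exchange v N" and a: "tree_compatible \<rho> a"
  shows "push \<rho> v a = extend_below \<rho> N (\<lambda>u. a (pre_word v u))"
  unfolding push_def
proof (rule the_equality)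
  let ?f = "extend_below \<rho> N (\<lambda>u. a (pre_word v u))"
  have f: "tree_compatible \<rho> ?f"
    using pre_word_compatible[OF v a] by (rule extend_below_compatible)
  then show "tree_compatible \<rho> ?f \<and> (\<exists>N. \<forall>u. N \<le> length u \<longrightarrow> ?f u = a (pre_word v u))"
    using extend_below_deep by blast
  fix g assume "tree_compatible \<rho> g \<and> (\<exists>N. \<forall>u. N \<le> length u \<longrightarrow> g u = a (pre_word v u))"
  then obtain M where "tree_compatible \<rho> g" "\<And>u. M \<le> length u \<Longrightarrow> g u = a (pre_word v u)"
    by blast
  with f show "g = ?f"
    by (intro tree_compatible_unique[where N = "max M N"]) auto
qed

lemma push_compatible:
  assumes "prefix_exchange v N" and "tree_compatible \<rho> a"
  shows "tree_compatible \<rho> (push \<rho> v a)"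
  unfolding push_eq_extend_below[OF assms]
  using pre_word_compatible[OF assms] by (rule extend_below_compatible)

lemma push_deep:
  "prefix_exchange v N \<Longrightarrow> tree_compatible \<rho> a \<Longrightarrow> N \<le> length u \<Longrightarrow> push \<rho> v a u = a (pre_word v u)"
  by (simp add: push_eq_extend_below)

lemma push_unique:
  assumes "prefix_exchange v N" "tree_compatible \<rho> a" "tree_compatible \<rho> f"
    and "\<And>u. M \<le> length u \<Longrightarrow> f u = a (pre_word v u)"
  shows "f = push \<rho> v a"
  using assms(3,4) push_compatible[OF assms(1,2)] push_deep[OF assms(1,2)]
  by (intro tree_compatible_unique[where N = "max M N"]) auto

lemma push_in_K_set:
  assumes "\<And>x y. x \<in> carrier \<Gamma> \<Longrightarrow> y \<in> carrier \<Gamma> \<Longrightarrow> \<rho> (x, y) \<in> carrier \<Gamma>"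
    and v: "prefix_exchange v N" and a: "a \<in> K_set \<Gamma> \<rho>"
  shows "push \<rho> v a \<in> K_set \<Gamma> \<rho>"
proof -
  have a_comp: "tree_compatible \<rho> a" and a_carrier: "\<And>u. a u \<in> carrier \<Gamma>"
    using a by (auto simp: K_set_iff)
  have "push \<rho> v a u \<in> carrier \<Gamma>" for u
    by (rule tree_compatible_closed[OF push_compatible[OF v a_comp] _ assms(1), where N = N])
      (simp_all add: push_deep[OF v a_comp] a_carrier)
  then show ?thesis using push_compatible[OF v a_comp] by (simp add: K_set_iff)
qed

lemma V_rep_shift_imp_deep:
  assumes rep: "V_rep v ts ss \<sigma>" and "inj v"
    and shift: "\<And>i w. i < length ts \<Longrightarrow> f (ss ! \<sigma> i @ w) = a (ts ! i @ w)"
    and "sum_list (map length ss) \<le> length u"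
  shows "f u = a (pre_word v u)"
  using V_rep_decomp[OF rep assms(4)] V_rep_pre_word[OF rep \<open>inj v\<close>] shift by auto

lemma V_rep_deep_imp_shift:
  assumes rep: "V_rep v ts ss \<sigma>" and "inj v" and "i < length ts"
    and f: "tree_compatible \<rho> f" and a: "tree_compatible \<rho> a"
    and deep: "\<And>u. N \<le> length u \<Longrightarrow> f u = a (pre_word v u)"
  shows "f (ss ! \<sigma> i @ w) = a (ts ! i @ w)"
proof (induction w rule: word_down_induct[of N])
  case (deep w)
  then show ?case using assms(6) V_rep_pre_word[OF rep \<open>inj v\<close> \<open>i < length ts\<close>] by simp
next
  case (split w)
  then show ?case using f a unfolding tree_compatible_def by (metis append_assoc)
qed

lemma pi_act_eq_push:
  assumes closed: "\<And>x y. x \<in> carrier \<Gamma> \<Longrightarrow> y \<in> carrier \<Gamma> \<Longrightarrow> \<rho> (x, y) \<in> carrier \<Gamma>"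
    and a: "a \<in> K_set \<Gamma> \<rho>" and v: "v \<in> V_set"
  shows "pi_act \<Gamma> \<rho> v a = push \<rho> v a"
  unfolding pi_act_def
proof (rule the_equality)
  have inj: "inj v" using V_set_inj[OF v] .
  have a_comp: "tree_compatible \<rho> a" using a by (simp add: K_set_iff)
  obtain ts ss \<sigma> where rep: "V_rep v ts ss \<sigma>" using v unfolding V_set_def by blast
  note pe = V_rep_prefix_exchange[OF v rep]
  show "push \<rho> v a \<in> K_set \<Gamma> \<rho> \<and> (\<exists>ts ss \<sigma>. V_rep v ts ss \<sigma> \<and>
      (\<forall>i < length ts. \<forall>u. push \<rho> v a (ss ! \<sigma> i @ u) = a (ts ! i @ u)))"
    using push_in_K_set[OF closed pe a] rep
      V_rep_deep_imp_shift[OF rep inj _ push_compatible[OF pe a_comp] a_comp push_deep[OF pe a_comp]]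
    by blast
  fix f assume "f \<in> K_set \<Gamma> \<rho> \<and> (\<exists>ts ss \<sigma>. V_rep v ts ss \<sigma> \<and>
      (\<forall>i < length ts. \<forall>u. f (ss ! \<sigma> i @ u) = a (ts ! i @ u)))"
  then obtain ts' ss' \<sigma>' where f: "tree_compatible \<rho> f" and rep': "V_rep v ts' ss' \<sigma>'"
    and shift: "\<And>i u. i < length ts' \<Longrightarrow> f (ss' ! \<sigma>' i @ u) = a (ts' ! i @ u)"
    by (auto simp: K_set_iff)
  have "f u = a (pre_word v u)" if "sum_list (map length ss') \<le> length u" for u
    using V_rep_shift_imp_deep[OF rep' inj _ that] shift by blast
  then show "f = push \<rho> v a" by (rule push_unique[OF pe a_comp f])
qed

lemma (in monoid) K_set_mult:
  assumes \<rho>: "\<rho> \<in> hom (G \<times>\<times> G) G" and a: "a \<in> K_set G \<rho>" and b: "b \<in> K_set G \<rho>"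
  shows "(\<lambda>u. a u \<otimes> b u) \<in> K_set G \<rho>"
proof -
  have "\<rho> (x \<otimes> z, y \<otimes> w) = \<rho> (x, y) \<otimes> \<rho> (z, w)"
    if "x \<in> carrier G" "y \<in> carrier G" "z \<in> carrier G" "w \<in> carrier G" for x y z w
    using hom_mult[OF \<rho>, of "(x, y)" "(z, w)"] that by simp
  then show ?thesis
    using a b unfolding K_set_iff tree_compatible_def by (metis m_closed)
qed

lemma (in group) inv_mult_cancel: "x \<in> carrier G \<Longrightarrow> y \<in> carrier G \<Longrightarrow> inv x \<otimes> (x \<otimes> y) = y"
  by (simp add: m_assoc [symmetric])

lemma (in group) mult_inv_cancel: "x \<in> carrier G \<Longrightarrow> y \<in> carrier G \<Longrightarrow> x \<otimes> (inv x \<otimes> y) = y"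
  by (simp add: m_assoc [symmetric])

lemma carrier_G_grp: "carrier (G_grp \<Gamma> \<rho>) = K_set \<Gamma> \<rho> \<times> V_set"
  by (simp add: G_grp_def)

lemma mult_G_grp: "(a, v) \<otimes>\<^bsub>G_grp \<Gamma> \<rho>\<^esub> (a', w) = (\<lambda>u. a u \<otimes>\<^bsub>\<Gamma>\<^esub> pi_act \<Gamma> \<rho> v a' u, v \<circ> w)"
  by (simp add: G_grp_def)

locale twisted_recursion = group \<Gamma> for \<Gamma> :: "('g, 'm) monoid_scheme" (structure) +
  fixes \<omega> :: "'g \<times> 'g \<Rightarrow> 'g" and h :: 'g and b :: "bool list \<Rightarrow> 'g"
  assumes \<omega>_hom: "\<omega> \<in> hom (\<Gamma> \<times>\<times> \<Gamma>) \<Gamma>"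
    and h_closed: "h \<in> carrier \<Gamma>"
    and b_K_set: "b \<in> K_set \<Gamma> (\<lambda>p. h \<otimes> \<omega> p)"
begin

abbreviation \<rho> :: "'g \<times> 'g \<Rightarrow> 'g" where "\<rho> \<equiv> \<lambda>p. h \<otimes> \<omega> p"

abbreviation \<omega>' :: "'g \<times> 'g \<Rightarrow> 'g" where "\<omega>' \<equiv> \<lambda>p. h \<otimes> \<omega> p \<otimes> inv h"

lemma \<omega>_closed: "x \<in> carrier \<Gamma> \<Longrightarrow> y \<in> carrier \<Gamma> \<Longrightarrow> \<omega> (x, y) \<in> carrier \<Gamma>"
  using hom_in_carrier[OF \<omega>_hom, of "(x, y)"] by simp

lemma \<omega>_mult:
  "\<lbrakk>x \<in> carrier \<Gamma>; y \<in> carrier \<Gamma>; z \<in> carrier \<Gamma>; w \<in> carrier \<Gamma>\<rbrakk>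
    \<Longrightarrow> \<omega> (x \<otimes> z, y \<otimes> w) = \<omega> (x, y) \<otimes> \<omega> (z, w)"
  using hom_mult[OF \<omega>_hom, of "(x, y)" "(z, w)"] by simp

lemma \<omega>_inv: "x \<in> carrier \<Gamma> \<Longrightarrow> y \<in> carrier \<Gamma> \<Longrightarrow> \<omega> (inv x, inv y) = inv \<omega> (x, y)"
proof -
  assume "x \<in> carrier \<Gamma>" "y \<in> carrier \<Gamma>"
  moreover have "group_hom (\<Gamma> \<times>\<times> \<Gamma>) \<Gamma> \<omega>"
    by (simp add: group_hom_def group_hom_axioms_def DirProd_group is_group \<omega>_hom)
  ultimately show ?thesis
    using group_hom.hom_inv[of "\<Gamma> \<times>\<times> \<Gamma>" \<Gamma> \<omega> "(x, y)"] by (simp add: is_group)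
qed

lemma \<rho>_closed: "x \<in> carrier \<Gamma> \<Longrightarrow> y \<in> carrier \<Gamma> \<Longrightarrow> \<rho> (x, y) \<in> carrier \<Gamma>"
  by (simp add: \<omega>_closed h_closed)

lemma \<omega>'_closed: "x \<in> carrier \<Gamma> \<Longrightarrow> y \<in> carrier \<Gamma> \<Longrightarrow> \<omega>' (x, y) \<in> carrier \<Gamma>"
  by (simp add: \<omega>_closed h_closed)

lemma \<omega>'_hom: "\<omega>' \<in> hom (\<Gamma> \<times>\<times> \<Gamma>) \<Gamma>"
  by (rule homI) (auto simp: \<omega>'_closed \<omega>_closed \<omega>_mult h_closed m_assoc inv_mult_cancel)

lemma b_carrier: "b u \<in> carrier \<Gamma>"
  using b_K_set by (simp add: K_set_iff)

lemma twist_identity: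
  assumes "x \<in> carrier \<Gamma>" "y \<in> carrier \<Gamma>" "z \<in> carrier \<Gamma>"
    and "x' \<in> carrier \<Gamma>" "y' \<in> carrier \<Gamma>" "z' \<in> carrier \<Gamma>"
  shows "\<omega>' (x \<otimes> y \<otimes> inv z, x' \<otimes> y' \<otimes> inv z') = \<rho> (x, x') \<otimes> \<omega> (y, y') \<otimes> inv \<rho> (z, z')"
  using assms by (simp add: \<omega>_mult \<omega>_inv \<omega>_closed h_closed m_assoc inv_mult_group)

lemma twist_K_set_iff:
  assumes c: "c \<in> K_set \<Gamma> \<rho>" and a: "\<And>u. a u \<in> carrier \<Gamma>"
  shows "(\<lambda>u. b u \<otimes> a u \<otimes> inv c u) \<in> K_set \<Gamma> \<omega>' \<longleftrightarrow> a \<in> K_set \<Gamma> \<omega>"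
proof -
  have c_carrier: "c u \<in> carrier \<Gamma>"
    and b_rec: "b u = \<rho> (b (u @ [False]), b (u @ [True]))"
    and c_rec: "c u = \<rho> (c (u @ [False]), c (u @ [True]))" for u
    using b_K_set c unfolding K_set_iff tree_compatible_def by blast+
  have "b u \<otimes> a u \<otimes> inv c u = \<omega>' (b (u @ [False]) \<otimes> a (u @ [False]) \<otimes> inv c (u @ [False]),
                                  b (u @ [True]) \<otimes> a (u @ [True]) \<otimes> inv c (u @ [True]))
        \<longleftrightarrow> a u = \<omega> (a (u @ [False]), a (u @ [True]))" for u
    using twist_identity b_rec[of u, symmetric] c_rec[of u, symmetric] b_carrier c_carrier a
    by (simp add: \<omega>_closed)
  then show ?thesis
    using a b_carrier c_carrier unfolding K_set_iff tree_compatible_def by simp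
qed

definition twist :: "(bool list \<Rightarrow> 'g) \<times> cantor_map \<Rightarrow> (bool list \<Rightarrow> 'g) \<times> cantor_map" where
  "twist = (\<lambda>(a, v). (\<lambda>u. b u \<otimes> a u \<otimes> inv (push \<rho> v b u), v))"

definition untwist :: "(bool list \<Rightarrow> 'g) \<times> cantor_map \<Rightarrow> (bool list \<Rightarrow> 'g) \<times> cantor_map" where
  "untwist = (\<lambda>(x, v). (\<lambda>u. inv (b u) \<otimes> x u \<otimes> push \<rho> v b u, v))"

lemma push_b_K_set: "prefix_exchange v N \<Longrightarrow> push \<rho> v b \<in> K_set \<Gamma> \<rho>"
  using push_in_K_set[OF \<rho>_closed _ b_K_set] by blast

lemma twist_in_K_set:
  "a \<in> K_set \<Gamma> \<omega> \<Longrightarrow> prefix_exchange v N \<Longrightarrow> (\<lambda>u. b u \<otimes> a u \<otimes> inv push \<rho> v b u) \<in> K_set \<Gamma> \<omega>'"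
  using twist_K_set_iff[OF push_b_K_set] by (simp add: K_set_iff)

lemma twist_mult:
  assumes a: "a \<in> K_set \<Gamma> \<omega>" and a': "a' \<in> K_set \<Gamma> \<omega>" and v: "v \<in> V_set" and w: "w \<in> V_set"
  shows "twist ((a, v) \<otimes>\<^bsub>G_grp \<Gamma> \<omega>\<^esub> (a', w)) = twist (a, v) \<otimes>\<^bsub>G_grp \<Gamma> \<omega>'\<^esub> twist (a', w)"
proof -
  obtain N M where N: "prefix_exchange v N" and M: "prefix_exchange w M"
    using V_set_prefix_exchange v w by blast
  define y where "y = (\<lambda>u. b u \<otimes> a' u \<otimes> inv push \<rho> w b u)"
  define lhs where "lhs = (\<lambda>u. b u \<otimes> (a u \<otimes> push \<omega> v a' u) \<otimes> inv push \<rho> (v \<circ> w) b u)"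
  define rhs where "rhs = (\<lambda>u. (b u \<otimes> a u \<otimes> inv push \<rho> v b u) \<otimes> push \<omega>' v y u)"
  have \<omega>_eq: "pi_act \<Gamma> \<omega> v a' = push \<omega> v a'"
    using pi_act_eq_push[OF _ a' v] \<omega>_closed by blast
  have y: "y \<in> K_set \<Gamma> \<omega>'" unfolding y_def using twist_in_K_set[OF a' M] .
  have \<omega>'_eq: "pi_act \<Gamma> \<omega>' v y = push \<omega>' v y"
    using pi_act_eq_push[OF _ y v] \<omega>'_closed by blast
  have "lhs \<in> K_set \<Gamma> \<omega>'"
    using twist_in_K_set[OF K_set_mult[OF \<omega>_hom a push_in_K_set[OF _ N a']] prefix_exchange_comp[OF N M]]
      \<omega>_closed unfolding lhs_def by blast
  moreover have "rhs \<in> K_set \<Gamma> \<omega>'"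
    using K_set_mult[OF \<omega>'_hom twist_in_K_set[OF a N] push_in_K_set[OF _ N y]] \<omega>'_closed
    unfolding rhs_def by blast
  moreover have "lhs u = rhs u" if u: "N + M \<le> length u" for u
  proof -
    define p where "p = pre_word v u"
    define q where "q = pre_word w p"
    have uN: "N \<le> length u" and pM: "M \<le> length p"
      using prefix_exchangeD(2)[OF N, of u] u unfolding p_def by simp_all
    have b_comp: "tree_compatible \<rho> b" and a'_comp: "tree_compatible \<omega> a'"
      and y_comp: "tree_compatible \<omega>' y"
      using b_K_set a' y by (simp_all add: K_set_iff)
    have carrier: "b x \<in> carrier \<Gamma>" "a x \<in> carrier \<Gamma>" "a' x \<in> carrier \<Gamma>" for x
      using b_K_set a a' by (simp_all add: K_set_iff)
    have "lhs u = b u \<otimes> (a u \<otimes> a' p) \<otimes> inv b q"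
      using push_deep[OF N a'_comp uN] push_deep[OF prefix_exchange_comp[OF N M] b_comp u]
        pre_word_comp[OF N M u] unfolding lhs_def p_def q_def by simp
    also have "\<dots> = (b u \<otimes> a u \<otimes> inv b p) \<otimes> (b p \<otimes> a' p \<otimes> inv b q)"
      by (simp add: carrier m_assoc inv_mult_cancel)
    also have "\<dots> = rhs u"
      using push_deep[OF N b_comp uN] push_deep[OF N y_comp uN] push_deep[OF M b_comp pM]
      unfolding rhs_def y_def p_def q_def by simp
    finally show ?thesis .
  qed
  ultimately have "lhs = rhs"
    by (intro tree_compatible_unique[where N = "N + M"]) (auto simp: K_set_iff)
  then show ?thesis
    unfolding lhs_def rhs_def y_def
    by (simp add: twist_def mult_G_grp \<omega>_eq \<omega>'_eq[unfolded y_def])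
qed

lemma push_b_carrier: "v \<in> V_set \<Longrightarrow> push \<rho> v b u \<in> carrier \<Gamma>"
  using V_set_prefix_exchange push_b_K_set by (metis K_set_iff)

lemma untwist_twist:
  assumes "a \<in> K_set \<Gamma> \<omega>" and "v \<in> V_set"
  shows "untwist (twist (a, v)) = (a, v)"
  using assms push_b_carrier[OF assms(2)] b_carrier
  by (simp add: twist_def untwist_def K_set_iff fun_eq_iff m_assoc inv_mult_cancel)

lemma twist_untwist:
  assumes "x \<in> K_set \<Gamma> \<omega>'" and "v \<in> V_set"
  shows "twist (untwist (x, v)) = (x, v)"
  using assms push_b_carrier[OF assms(2)] b_carrier
  by (simp add: twist_def untwist_def K_set_iff fun_eq_iff m_assoc mult_inv_cancel)

lemma twist_closed:
  assumes "a \<in> K_set \<Gamma> \<omega>" and "v \<in> V_set"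
  shows "twist (a, v) \<in> K_set \<Gamma> \<omega>' \<times> V_set"
  using twist_in_K_set[OF assms(1)] V_set_prefix_exchange[OF assms(2)] assms(2)
  by (auto simp: twist_def)

lemma untwist_closed:
  assumes x: "x \<in> K_set \<Gamma> \<omega>'" and v: "v \<in> V_set"
  shows "untwist (x, v) \<in> K_set \<Gamma> \<omega> \<times> V_set"
proof -
  obtain N where N: "prefix_exchange v N" using V_set_prefix_exchange[OF v] by blast
  define a where "a = (\<lambda>u. inv b u \<otimes> x u \<otimes> push \<rho> v b u)"
  have a_carrier: "a u \<in> carrier \<Gamma>" for u
    using x push_b_carrier[OF v] b_carrier by (simp add: a_def K_set_iff)
  have "(\<lambda>u. b u \<otimes> a u \<otimes> inv push \<rho> v b u) = x"
    using twist_untwist[OF x v] by (simp add: twist_def untwist_def a_def)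
  then have "a \<in> K_set \<Gamma> \<omega>" using twist_K_set_iff[OF push_b_K_set[OF N], of a, OF a_carrier] x by simp
  then show ?thesis using v by (simp add: untwist_def a_def)
qed

lemma twist_iso: "twist \<in> iso (G_grp \<Gamma> \<omega>) (G_grp \<Gamma> \<omega>')"
proof -
  have "bij_betw twist (K_set \<Gamma> \<omega> \<times> V_set) (K_set \<Gamma> \<omega>' \<times> V_set)"
  proof (rule bij_betw_byWitness[where f' = untwist])
    show "\<forall>p \<in> K_set \<Gamma> \<omega> \<times> V_set. untwist (twist p) = p"
      using untwist_twist by blast
    show "\<forall>p \<in> K_set \<Gamma> \<omega>' \<times> V_set. twist (untwist p) = p"
      using twist_untwist by blast
    show "twist ` (K_set \<Gamma> \<omega> \<times> V_set) \<subseteq> K_set \<Gamma> \<omega>' \<times> V_set"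
      using twist_closed by blast
    show "untwist ` (K_set \<Gamma> \<omega>' \<times> V_set) \<subseteq> K_set \<Gamma> \<omega> \<times> V_set"
      using untwist_closed by blast
  qed
  moreover have "twist \<in> hom (G_grp \<Gamma> \<omega>) (G_grp \<Gamma> \<omega>')"
  proof (rule homI)
    show "twist p \<in> carrier (G_grp \<Gamma> \<omega>')" if "p \<in> carrier (G_grp \<Gamma> \<omega>)" for p
      using that twist_closed by (auto simp: carrier_G_grp)
    show "twist (p \<otimes>\<^bsub>G_grp \<Gamma> \<omega>\<^esub> q) = twist p \<otimes>\<^bsub>G_grp \<Gamma> \<omega>'\<^esub> twist q"
      if "p \<in> carrier (G_grp \<Gamma> \<omega>)" "q \<in> carrier (G_grp \<Gamma> \<omega>)" for p q
      using that twist_mult by (auto simp: carrier_G_grp)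
  qed
  ultimately show ?thesis by (simp add: iso_def carrier_G_grp)
qed

end

theorem mainTheorem14:
  fixes \<Gamma> :: "('g, 'm) monoid_scheme" and \<omega> :: "'g \<times> 'g \<Rightarrow> 'g"
    and h :: 'g and b :: "bool list \<Rightarrow> 'g"
  assumes "group \<Gamma>"
    and "\<omega> \<in> hom (\<Gamma> \<times>\<times> \<Gamma>) \<Gamma>"
    and "h \<in> carrier \<Gamma>"
    and "\<forall>u. b u \<in> carrier \<Gamma>"
    and "\<forall>u. b u = h \<otimes>\<^bsub>\<Gamma>\<^esub> \<omega> (b (u @ [False]), b (u @ [True]))"
  shows "G_grp \<Gamma> \<omega> \<cong> G_grp \<Gamma> (\<lambda>p. h \<otimes>\<^bsub>\<Gamma>\<^esub> \<omega> p \<otimes>\<^bsub>\<Gamma>\<^esub> inv\<^bsub>\<Gamma>\<^esub> h)"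
proof -
  have "b \<in> K_set \<Gamma> (\<lambda>p. h \<otimes>\<^bsub>\<Gamma>\<^esub> \<omega> p)" using assms(4,5) unfolding K_set_def by blast
  then interpret twisted_recursion \<Gamma> \<omega> h b
    using assms(1-3) by (simp add: twisted_recursion_def twisted_recursion_axioms_def)
  show ?thesis using twist_iso unfolding is_iso_def by blast
qed

end
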